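(* Let $m\ge1$, $\delta>-m$, $\tau=3+\delta/m$, let $k>m$ be an integer and $t\in(0,1)$. Consider the Pólya point tree with parameters $m,\delta$, with root $\phi$ of age $U_\phi$ and degree $d_\phi$; its children $\phi1,\dots,\phi m$ are the older (label $o$) children and $\phi(m+1),\phi(m+2),\dots$ are the younger (label $y$) children listed in increasing order of age, with ages $A_{m+1}\le A_{m+2}\le\dots$ given by the points of the Cox process. Let $\pi$ be a uniformly random permutation of $\{m+1,\dots,k\}$, independent of everything else. (a) Conditionally on $U_\phi=t$ and $d_\phi=k$, the ages $(A_{\pi_j})_{j=m+1}^k$ of the $k-m$ younger children of the root are i.i.d., each distributed as a random variable $A^{(t)}_{\pi_{m+1}}$ with Lebesgue density $$f_{t,\tau}(x)=\mathbb{1}_{[t,1]}(x)\frac{x^{\frac{1}{\tau-1}-1}}{(\tau-1)(1-t^{\frac{1}{\tau-1}})}.$$ (b) For every $t\in(0,1)$, $A^{(t)}_{\pi_{m+1}}$ is stochastically bounded from below by a random variable $A^{(0)}_{\pi_{m+1}}$ with density $f_{0,\tau}(x)=\mathbb{1}_{[0,1]}(x)\frac{x^{\frac{1}{\tau-1}-1}}{\tau-1}$, i.e. $\mathbb{P}(A^{(0)}_{\pi_{m+1}}\ge x)\le\mathbb{P}(A^{(t)}_{\pi_{m+1}}\ge x)$ for all $x\in\mathbb{R}$.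
   Context: Pólya point tree with parameters $m\in\mathbb{N}$, $\delta>-m$: a random rooted tree; each vertex $w$ has an age $A_w\in[0,1]$ and, except the root, a label in $\{y,o\}$. The root has age $U_\phi\sim\mathrm{Unif}[0,1]$ and no label. A vertex $w$ has $m_-(w)$ children of label $o$, with $m_-(w)=m-1$ if $w$ has label $y$ and $m_-(w)=m$ otherwise (root or label $o$), with ages $U_{wj}^{\chi}A_w$ ($U_{wj}$ i.i.d. uniform on $[0,1]$, $\chi=\frac{m+\delta}{2m+\delta}$), and further children of label $y$ whose ages are the ordered points of a Cox process on $[A_w,1]$ with intensity $\frac{\Gamma_w}{\tau-1}\frac{x^{1/(\tau-1)-1}}{A_w^{1/(\tau-1)}}dx$, where, independently of everything else, $\Gamma_w\sim\mathrm{Gamma}(m+\delta+1,1)$ if $w$ has label $o$ and $\Gamma_w\sim\mathrm{Gamma}(m+\delta,1)$ otherwise. Edges join each vertex to its children; the root's degree $d_\phi$ is its number of children. *)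

theory Defs
  imports "HOL-Probability.Probability"
begin

definition gamma_dens :: "real \<Rightarrow> real \<Rightarrow> real" where
  "gamma_dens a x = (if x > 0 then x powr (a - 1) * exp (- x) / Gamma a else 0)"

definition tau_par :: "nat \<Rightarrow> real \<Rightarrow> real" where
  "tau_par m \<delta> = 3 + \<delta> / real m"

(* intensity of the Cox process of younger children of a vertex of age a,
   given Gamma_w = g, at the point x (zero outside [a,1]) *)
definition cox_intensity :: "real \<Rightarrow> real \<Rightarrow> real \<Rightarrow> real \<Rightarrow> real" where
  "cox_intensity \<tau> a g x =
     indicator {a..1} x * (g / (\<tau> - 1)) * x powr (1 / (\<tau> - 1) - 1) / a powr (1 / (\<tau> - 1))"

definition cox_mean :: "real \<Rightarrow> real \<Rightarrow> real \<Rightarrow> real set \<Rightarrow> real" where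
  "cox_mean \<tau> a g B = (LINT x:B|lborel. cox_intensity \<tau> a g x)"

definition poisson_prob :: "real \<Rightarrow> nat \<Rightarrow> real" where
  "poisson_prob r c = exp (- r) * r ^ c / fact c"

definition young_count :: "nat \<Rightarrow> nat \<Rightarrow> (nat \<Rightarrow> real) \<Rightarrow> real set \<Rightarrow> nat" where
  "young_count m N A S = card {j. m < j \<and> j \<le> m + N \<and> A j \<in> S}"

(* The root of the Polya point tree with parameters m, delta, conditioned on U_phi = t:
   Gam is Gamma_phi ~ Gamma(m+delta,1); N is the number of younger children of the root
   (so d_phi = m + N); A j (m < j <= m + N) are the ages of the younger children phi j,
   in increasing order; given Gam = g they form a Poisson process on [t,1] with intensity
   cox_intensity tau t g (i.e. a Cox process directed by Gam). *)
definition polya_root_younger ::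
  "'w measure \<Rightarrow> nat \<Rightarrow> real \<Rightarrow> real \<Rightarrow> ('w \<Rightarrow> real) \<Rightarrow> ('w \<Rightarrow> nat) \<Rightarrow> ('w \<Rightarrow> nat \<Rightarrow> real) \<Rightarrow> bool"
where
  "polya_root_younger M m \<delta> t Gam N A \<longleftrightarrow>
     prob_space M \<and>
     Gam \<in> borel_measurable M \<and>
     N \<in> measurable M (count_space UNIV) \<and>
     A \<in> measurable M (Pi\<^sub>M UNIV (\<lambda>_. borel)) \<and>
     distributed M lborel Gam (\<lambda>x. ennreal (gamma_dens (real m + \<delta>) x)) \<and>
     (\<forall>\<omega>\<in>space M. \<forall>i j. m < i \<longrightarrow> i \<le> j \<longrightarrow> j \<le> m + N \<omega> \<longrightarrow> A \<omega> i \<le> A \<omega> j) \<and>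
     (\<forall>n (B :: nat \<Rightarrow> real set) (c :: nat \<Rightarrow> nat) G.
        G \<in> sets borel \<longrightarrow> (\<forall>i<n. B i \<in> sets borel) \<longrightarrow> disjoint_family_on B {..<n} \<longrightarrow>
        measure M {\<omega> \<in> space M. Gam \<omega> \<in> G \<and> (\<forall>i<n. young_count m (N \<omega>) (A \<omega>) (B i) = c i)}
        = (\<integral>\<omega>. indicator G (Gam \<omega>) *
              (\<Prod>i<n. poisson_prob (cox_mean (tau_par m \<delta>) t (Gam \<omega>) (B i)) (c i)) \<partial>M))"

definition f_dens :: "real \<Rightarrow> real \<Rightarrow> real \<Rightarrow> real" where
  "f_dens t \<tau> x = indicator {t..1} x * x powr (1 / (\<tau> - 1) - 1)
                    / ((\<tau> - 1) * (1 - t powr (1 / (\<tau> - 1))))"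

end

theory Submission
  imports Defs "HOL-Combinatorics.Multiset_Permutations"
begin

(*
  Given Gamma = g, the younger children of the root form a Poisson process with intensity
  g * kappa * f_{t,tau}, where kappa = (1 - t^(1/(tau-1))) / t^(1/(tau-1)).  So their numbers in
  the cells of a finite Borel partition are independent Poisson variables given Gamma, and after
  mixing over Gamma they are, given N = n, multinomial with cell probabilities the f_{t,tau}-masses
  of the cells.  For the partition generated by B_(m+1), ..., B_k this determines the law of the
  multiset of cells met by the ordered ages, which is the multiset law of an i.i.d. sample from
  f_{t,tau}; composing with an independent uniform permutation only sees this multiset, so the
  permuted ages are i.i.d. with density f_{t,tau}.  Part (b) is explicit: the tail integral of
  f_{s,tau} increases with s.
*)

section \<open>The age densities\<close>

lemma set_integral_powr_Icc:
  fixes a b e :: real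
  assumes a: "0 \<le> a" and ab: "a \<le> b" and e: "e > -1"
  shows "set_integrable lborel {a..b} (\<lambda>x. x powr e)"
    and "(LINT x:{a..b}|lborel. x powr e) = (b powr (e + 1) - a powr (e + 1)) / (e + 1)"
proof -
  have hb: "((\<lambda>x. x powr e) has_integral (b powr (e + 1) / (e + 1))) {0..b}"
    using has_integral_powr_from_0[OF e] a ab by auto
  have ha: "((\<lambda>x. x powr e) has_integral (a powr (e + 1) / (e + 1))) {0..a}"
    using has_integral_powr_from_0[OF e] a by auto
  have "(\<lambda>x. x powr e) integrable_on {a..b}"
    by (rule integrable_subinterval_real[OF has_integral_integrable[OF hb]]) (use a in auto)
  then obtain X where X: "((\<lambda>x. x powr e) has_integral X) {a..b}"
    by (auto simp: integrable_on_def)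
  have "((\<lambda>x. x powr e) has_integral (a powr (e + 1) / (e + 1) + X)) {0..b}"
    by (rule has_integral_combine[OF a ab ha X])
  then have "a powr (e + 1) / (e + 1) + X = b powr (e + 1) / (e + 1)"
    using hb has_integral_unique by blast
  then have "X = (b powr (e + 1) - a powr (e + 1)) / (e + 1)"
    by (simp add: diff_divide_distrib)
  moreover show integrable: "set_integrable lborel {a..b} (\<lambda>x. x powr e)"
  proof -
    have "(\<lambda>x. x powr e) absolutely_integrable_on {a..b}"
      by (rule nonnegative_absolutely_integrable_1) (use X in \<open>auto simp: integrable_on_def\<close>)
    moreover have "(\<lambda>x. indicator {a..b} x *\<^sub>R x powr e) \<in> borel_measurable lborel"
      by measurable
    ultimately show ?thesis
      unfolding set_integrable_def by (simp add: integrable_completion)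
  qed
  ultimately show "(LINT x:{a..b}|lborel. x powr e) = (b powr (e + 1) - a powr (e + 1)) / (e + 1)"
    using set_borel_integral_eq_integral(2)[OF integrable] X by (simp add: integral_unique)
qed

lemma powr_less_one_of_less_one:
  fixes s a :: real
  assumes "0 \<le> s" "s < 1" "a > 0"
  shows "s powr a < 1"
  using powr_less_mono2[of a s 1] assms by simp

lemma set_integral_f_dens_Icc:
  fixes \<tau> s u :: real
  assumes \<tau>: "\<tau> > 1" and s: "0 \<le> s" "s < 1" and u: "s \<le> u" "u \<le> 1"
  shows "(LINT y:{u..1}|lborel. f_dens s \<tau> y)
       = (1 - u powr (1 / (\<tau> - 1))) / (1 - s powr (1 / (\<tau> - 1)))"
proof -
  define \<alpha> where "\<alpha> = 1 / (\<tau> - 1)"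
  have \<alpha>: "\<alpha> > 0" "\<alpha> * (\<tau> - 1) = 1"
    using \<tau> by (auto simp: \<alpha>_def)
  have "indicator {u..1} y *\<^sub>R f_dens s \<tau> y
      = indicator {u..1} y *\<^sub>R y powr (\<alpha> - 1) / ((\<tau> - 1) * (1 - s powr \<alpha>))" for y
    using u by (auto simp: f_dens_def \<alpha>_def indicator_def)
  then have "(LINT y:{u..1}|lborel. f_dens s \<tau> y)
      = (LINT y:{u..1}|lborel. y powr (\<alpha> - 1)) / ((\<tau> - 1) * (1 - s powr \<alpha>))"
    unfolding set_lebesgue_integral_def by simp
  also have "\<dots> = (1 - u powr \<alpha>) / ((\<alpha> * (\<tau> - 1)) * (1 - s powr \<alpha>))"
    using set_integral_powr_Icc(2)[of u 1 "\<alpha> - 1"] s u \<alpha> by (simp add: mult.assoc)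
  finally show ?thesis
    using \<alpha>(2) by (simp add: \<alpha>_def)
qed

lemma set_integral_f_dens_atLeast:
  fixes \<tau> s x :: real
  assumes \<tau>: "\<tau> > 1" and s: "0 \<le> s" "s < 1"
  shows "(LINT y:{x..}|lborel. f_dens s \<tau> y)
       = (if x \<le> s then 1
          else if x \<le> 1 then (1 - x powr (1 / (\<tau> - 1))) / (1 - s powr (1 / (\<tau> - 1)))
          else 0)"
proof -
  have tail: "(LINT y:{x..}|lborel. f_dens s \<tau> y) = (LINT y:{x..} \<inter> {s..1}|lborel. f_dens s \<tau> y)"
    unfolding set_lebesgue_integral_def
    by (rule Bochner_Integration.integral_cong) (auto simp: f_dens_def indicator_def)
  consider "x \<le> s" | "s < x" "x \<le> 1" | "1 < x"
    by linarith
  then show ?thesis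
  proof cases
    case 1
    then have "{x..} \<inter> {s..1} = {s..1}"
      by auto
    moreover have "s powr (1 / (\<tau> - 1)) < 1"
      using powr_less_one_of_less_one[OF s] \<tau> by simp
    ultimately show ?thesis
      using tail set_integral_f_dens_Icc[OF \<tau> s order_refl] s 1 by simp
  next
    case 2
    then have "{x..} \<inter> {s..1} = {x..1}"
      by auto
    then show ?thesis
      using tail set_integral_f_dens_Icc[OF \<tau> s] 2 by simp
  next
    case 3
    then have "{x..} \<inter> {s..1} = {}"
      by auto
    then show ?thesis
      using tail 3 s by (simp add: set_lebesgue_integral_def)
  qed
qed

lemma set_integral_f_dens_atLeast_mono:
  fixes \<tau> s s' x :: real
  assumes \<tau>: "\<tau> > 1" and s: "0 \<le> s" "s \<le> s'" "s' < 1"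
  shows "(LINT y:{x..}|lborel. f_dens s \<tau> y) \<le> (LINT y:{x..}|lborel. f_dens s' \<tau> y)"
proof -
  define \<alpha> where "\<alpha> = 1 / (\<tau> - 1)"
  have \<alpha>: "\<alpha> > 0"
    using \<tau> by (simp add: \<alpha>_def)
  have s'\<alpha>: "s' powr \<alpha> < 1"
    using powr_less_one_of_less_one[of s' \<alpha>] s \<alpha> by simp
  have ss': "s powr \<alpha> \<le> s' powr \<alpha>"
    using powr_mono2[of \<alpha> s s'] s \<alpha> by simp
  have x\<alpha>: "0 \<le> 1 - x powr \<alpha>" "s powr \<alpha> < x powr \<alpha>" if "s < x" "x \<le> 1"
    using powr_mono2[of \<alpha> x 1] powr_less_mono2[of \<alpha> s x] that s \<alpha> by simp_all
  consider "x \<le> s" | "s < x" "x \<le> s'" | "s' < x" "x \<le> 1" | "1 < x"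
    by linarith
  then have "(if x \<le> s then 1 else if x \<le> 1 then (1 - x powr \<alpha>) / (1 - s powr \<alpha>) else 0)
      \<le> (if x \<le> s' then 1 else if x \<le> 1 then (1 - x powr \<alpha>) / (1 - s' powr \<alpha>) else 0)"
  proof cases
    case 1
    then show ?thesis
      using s by simp
  next
    case 2
    have "(1 - x powr \<alpha>) / (1 - s powr \<alpha>) \<le> 1" if "x \<le> 1"
      using x\<alpha>[OF 2(1) that] s'\<alpha> ss' by (simp add: divide_le_eq_1)
    then show ?thesis
      using 2 by simp
  next
    case 3
    have "(1 - x powr \<alpha>) / (1 - s powr \<alpha>) \<le> (1 - x powr \<alpha>) / (1 - s' powr \<alpha>)"
      using x\<alpha>[OF _ 3(2)] 3 s s'\<alpha> ss' by (intro divide_left_mono) auto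
    then show ?thesis
      using 3 s by simp
  next
    case 4
    then show ?thesis
      using s by simp
  qed
  then show ?thesis
    unfolding set_integral_f_dens_atLeast[OF \<tau> s(1) le_less_trans[OF s(2,3)]]
      set_integral_f_dens_atLeast[OF \<tau> order_trans[OF s(1,2)] s(3)] \<alpha>_def .
qed

lemma integral_f_dens:
  fixes \<tau> s :: real
  assumes "\<tau> > 1" "0 \<le> s" "s < 1"
  shows "(LINT y|lborel. f_dens s \<tau> y) = 1"
proof -
  have "(LINT y|lborel. f_dens s \<tau> y) = (LINT y:{s..}|lborel. f_dens s \<tau> y)"
    unfolding set_lebesgue_integral_def
    by (rule Bochner_Integration.integral_cong) (simp_all add: f_dens_def indicator_def)
  then show ?thesis
    using set_integral_f_dens_atLeast[OF assms, of s] by simp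
qed

lemma integrable_f_dens:
  fixes \<tau> s :: real
  assumes \<tau>: "\<tau> > 1" and s: "0 \<le> s" "s < 1"
  shows "integrable lborel (f_dens s \<tau>)"
proof -
  have "set_integrable lborel {s..1} (\<lambda>x. x powr (1 / (\<tau> - 1) - 1))"
    using set_integral_powr_Icc(1)[of s 1] s \<tau> by simp
  then have "integrable lborel (\<lambda>x. indicator {s..1} x * x powr (1 / (\<tau> - 1) - 1)
               / ((\<tau> - 1) * (1 - s powr (1 / (\<tau> - 1)))))"
    unfolding set_integrable_def by simp
  then show ?thesis
    unfolding f_dens_def[abs_def] .
qed

lemma poisson_prob_pos: "r > 0 \<Longrightarrow> 0 < poisson_prob r c"
  by (simp add: poisson_prob_def)

lemma poisson_prob_le_1: "r > 0 \<Longrightarrow> poisson_prob r c \<le> 1"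
  using pmf_le_1[of "poisson_pmf r" c] by (simp add: poisson_prob_def mult_ac)

lemma prod_poisson_prob:
  fixes a :: real and v :: "'i \<Rightarrow> real" and c :: "'i \<Rightarrow> nat"
  assumes "finite S"
  shows "(\<Prod>i\<in>S. poisson_prob (a * v i) (c i))
       = exp (- (a * sum v S)) * a ^ sum c S * (\<Prod>i\<in>S. v i ^ c i / fact (c i))"
  using assms
proof (induction S rule: finite_induct)
  case (insert x F)
  have "exp (- (a * (v x + sum v F))) = exp (- (a * v x)) * exp (- (a * sum v F))"
    by (simp add: algebra_simps flip: exp_add)
  then show ?case
    using insert by (simp add: poisson_prob_def power_add power_mult_distrib mult_ac)
qed simp

lemma prod_if_else_zero:
  fixes f :: "'i \<Rightarrow> 'a :: comm_semiring_1"
  assumes "finite S"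
  shows "(\<Prod>i\<in>S. if P i then f i else 0) = (if \<forall>i\<in>S. P i then \<Prod>i\<in>S. f i else 0)"
  using assms by (induction S rule: finite_induct) simp_all

lemma sum_prod_list_permutations_of_multiset:
  fixes p :: "'a \<Rightarrow> real"
  shows "(\<Sum>xs\<in>permutations_of_multiset X. prod_list (map p xs))
       = fact (size X) * (\<Prod>x\<in>set_mset X. p x ^ count X x / fact (count X x))"
proof -
  define P where "P = (\<Prod>x\<in>set_mset X. p x ^ count X x)"
  define F :: real where "F = (\<Prod>x\<in>set_mset X. fact (count X x))"
  have "prod_list (map p xs) = P" if "xs \<in> permutations_of_multiset X" for xs
    using permutations_of_multisetD[OF that] unfolding P_def
    by (metis image_prod_mset_multiplicity mset_map prod_mset_prod_list)
  then have sum_eq: "(\<Sum>xs\<in>permutations_of_multiset X. prod_list (map p xs))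
      = card (permutations_of_multiset X) * P"
    by simp
  have "real (card (permutations_of_multiset X) * (\<Prod>x\<in>set_mset X. fact (count X x)))
      = real (fact (size X))"
    by (simp only: card_permutations_of_multiset_aux)
  then have "real (card (permutations_of_multiset X)) * F = fact (size X)"
    unfolding F_def of_nat_mult of_nat_prod of_nat_fact .
  moreover have "F > 0"
    unfolding F_def by (rule prod_pos) simp
  ultimately have card_eq: "real (card (permutations_of_multiset X)) = fact (size X) / F"
    by (simp add: eq_divide_eq)
  have "(\<Prod>x\<in>set_mset X. p x ^ count X x / fact (count X x)) = P / F"
    unfolding P_def F_def by (rule prod_dividef)
  then show ?thesis
    unfolding sum_eq card_eq by (simp only: times_divide_eq_left times_divide_eq_right)
qed

lemma sum_lists_length_eq_prod_nth:
  fixes h :: "nat \<Rightarrow> 'a \<Rightarrow> 'b :: comm_semiring_1"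
  assumes "finite A"
  shows "(\<Sum>xs | set xs \<subseteq> A \<and> length xs = n. \<Prod>i<n. h i (xs ! i)) = (\<Prod>i<n. \<Sum>a\<in>A. h i a)"
proof -
  have "(\<Sum>xs | set xs \<subseteq> A \<and> length xs = n. \<Prod>i<n. h i (xs ! i))
      = (\<Sum>e\<in>PiE {..<n} (\<lambda>_. A). \<Prod>i<n. h i (e i))"
  proof (rule sum.reindex_bij_witness[where j = "\<lambda>xs i. if i < n then xs ! i else undefined"
        and i = "\<lambda>e. map e [0..<n]"])
    fix xs assume xs: "xs \<in> {xs. set xs \<subseteq> A \<and> length xs = n}"
    then show "map (\<lambda>i. if i < n then xs ! i else undefined) [0..<n] = xs"
      by (simp add: list_eq_iff_nth_eq)
    show "(\<lambda>i. if i < n then xs ! i else undefined) \<in> PiE {..<n} (\<lambda>_. A)"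
      using xs nth_mem[of _ xs] by (intro PiE_I) auto
    show "(\<Prod>i<n. h i (if i < n then xs ! i else undefined)) = (\<Prod>i<n. h i (xs ! i))"
      by (rule prod.cong) simp_all
  next
    fix e assume e: "e \<in> PiE {..<n} (\<lambda>_. A)"
    show "(\<lambda>i. if i < n then map e [0..<n] ! i else undefined) = e"
      using PiE_arb[OF e] by (auto simp: fun_eq_iff)
    show "map e [0..<n] \<in> {xs. set xs \<subseteq> A \<and> length xs = n}"
      using PiE_mem[OF e] by auto
  qed
  also have "\<dots> = (\<Prod>i<n. \<Sum>a\<in>A. h i a)"
    by (rule prod_sum_PiE[symmetric]) (use assms in auto)
  finally show ?thesis .
qed

lemma sum_mult_eq_if_fibre_sums_eq:
  fixes g q r :: "'a \<Rightarrow> 'b :: semiring_0"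
  assumes S: "finite S"
    and g: "\<And>x y. x \<in> S \<Longrightarrow> y \<in> S \<Longrightarrow> f x = f y \<Longrightarrow> g x = g y"
    and qr: "\<And>x. x \<in> S \<Longrightarrow> (\<Sum>y | y \<in> S \<and> f y = f x. q y) = (\<Sum>y | y \<in> S \<and> f y = f x. r y)"
  shows "(\<Sum>x\<in>S. g x * q x) = (\<Sum>x\<in>S. g x * r x)"
proof -
  have fibre: "(\<Sum>y | y \<in> S \<and> f y = f x. g y * u y) = g x * (\<Sum>y | y \<in> S \<and> f y = f x. u y)"
    if "x \<in> S" for x and u :: "'a \<Rightarrow> 'b"
    using g[OF _ that] by (simp add: sum_distrib_left)
  have "(\<Sum>x\<in>S. g x * q x) = (\<Sum>z\<in>f ` S. \<Sum>y | y \<in> S \<and> f y = z. g y * q y)"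
    by (rule sum.image_gen[OF S])
  also have "\<dots> = (\<Sum>z\<in>f ` S. \<Sum>y | y \<in> S \<and> f y = z. g y * r y)"
    by (rule sum.cong) (auto simp: fibre qr)
  also have "\<dots> = (\<Sum>x\<in>S. g x * r x)"
    by (rule sum.image_gen[OF S, symmetric])
  finally show ?thesis .
qed

lemma card_permutes_nth_mset_invariant:
  assumes "length xs = n" "length ys = n" "mset xs = mset ys"
  shows "card {\<sigma>. \<sigma> permutes {..<n} \<and> (\<forall>i<n. P i (xs ! \<sigma> i))}
       = card {\<sigma>. \<sigma> permutes {..<n} \<and> (\<forall>i<n. P i (ys ! \<sigma> i))}"
proof -
  obtain \<rho> where \<rho>: "\<rho> permutes {..<n}" "permute_list \<rho> ys = xs"
    using mset_eq_permutation[OF assms(3)] assms(2) by metis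
  have xs_ys: "xs ! (\<sigma> i) = ys ! ((\<rho> \<circ> \<sigma>) i)" if "\<sigma> permutes {..<n}" "i < n" for \<sigma> i
    using permute_list_nth[of \<rho> ys "\<sigma> i"] \<rho> assms(2) permutes_in_image[OF that(1)] that(2)
    by simp
  let ?count = "\<lambda>zs \<sigma>. if \<forall>i<n. P i (zs ! \<sigma> i) then 1 else 0 :: nat"
  have "(\<Sum>\<sigma> | \<sigma> permutes {..<n}. ?count ys \<sigma>) = (\<Sum>\<sigma> | \<sigma> permutes {..<n}. ?count ys (\<rho> \<circ> \<sigma>))"
    by (rule setum_permutations_compose_left[OF \<rho>(1)])
  also have "\<dots> = (\<Sum>\<sigma> | \<sigma> permutes {..<n}. ?count xs \<sigma>)"
    by (rule sum.cong) (simp_all add: xs_ys)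
  finally show ?thesis
    by (simp add: sum.inter_filter[symmetric] Collect_conj_eq[symmetric] finite_permutations)
qed

lemma sum_count_eq_size:
  assumes "finite A" "set_mset X \<subseteq> A"
  shows "(\<Sum>a\<in>A. count X a) = size X"
proof -
  have "(\<Sum>a\<in>A. count X a) = (\<Sum>a\<in>set_mset X. count X a)"
    by (rule sum.mono_neutral_right) (use assms in \<open>auto simp: not_in_iff\<close>)
  then show ?thesis
    by (simp add: size_multiset_overloaded_eq)
qed

section \<open>Counts of younger children in the cells of a partition\<close>

lemma young_count_UNIV: "young_count m n a UNIV = n"
proof -
  have "{j. m < j \<and> j \<le> m + n \<and> a j \<in> UNIV} = {m<..m + n}"
    by auto
  then show ?thesis
    by (simp add: young_count_def)
qed

locale polya_root = prob_space M for M :: "'w measure" +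
  fixes m :: nat and \<delta> t :: real
    and Gam :: "'w \<Rightarrow> real" and N :: "'w \<Rightarrow> nat" and A :: "'w \<Rightarrow> nat \<Rightarrow> real"
  assumes m: "m \<ge> 1" and \<delta>: "\<delta> > - real m" and t: "0 < t" "t < 1"
    and root: "polya_root_younger M m \<delta> t Gam N A"
begin

abbreviation \<tau> :: real where "\<tau> \<equiv> tau_par m \<delta>"

definition age_law :: "real set \<Rightarrow> real" where
  "age_law B = (LINT x:B|lborel. f_dens t \<tau> x)"

\<comment> \<open>Given \<open>Gam = g\<close>, the Cox intensity of the younger children has total mass \<open>g * \<kappa>\<close>.\<close>
definition \<kappa> :: real where
  "\<kappa> = (1 - t powr (1 / (\<tau> - 1))) / t powr (1 / (\<tau> - 1))"

lemma tau_gt_1: "\<tau> > 1"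
proof -
  have "\<delta> / real m > -1"
    using m \<delta> by (simp add: field_simps)
  then show ?thesis
    by (simp add: tau_par_def)
qed

lemma Gam_measurable [measurable]: "Gam \<in> borel_measurable M"
  and N_measurable [measurable]: "N \<in> measurable M (count_space UNIV)"
  and A_measurable [measurable]: "A \<in> measurable M (Pi\<^sub>M UNIV (\<lambda>_. borel))"
  and Gam_distributed: "distributed M lborel Gam (\<lambda>x. ennreal (gamma_dens (real m + \<delta>) x))"
  using root by (simp_all add: polya_root_younger_def)

lemma A_component_measurable [measurable]: "(\<lambda>\<omega>. A \<omega> i) \<in> borel_measurable M"
  using measurable_comp[OF A_measurable measurable_component_singleton[of i UNIV "\<lambda>_. borel"]]
  by (simp add: comp_def)

lemma young_count_law:
  "\<forall>n (B :: nat \<Rightarrow> real set) (c :: nat \<Rightarrow> nat) G.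
     G \<in> sets borel \<longrightarrow> (\<forall>i<n. B i \<in> sets borel) \<longrightarrow> disjoint_family_on B {..<n} \<longrightarrow>
     measure M {\<omega> \<in> space M. Gam \<omega> \<in> G \<and> (\<forall>i<n. young_count m (N \<omega>) (A \<omega>) (B i) = c i)}
     = (\<integral>\<omega>. indicator G (Gam \<omega>) *
          (\<Prod>i<n. poisson_prob (cox_mean \<tau> t (Gam \<omega>) (B i)) (c i)) \<partial>M)"
  using root unfolding polya_root_younger_def by blast

lemma Gam_pos_AE: "AE \<omega> in M. Gam \<omega> > 0"
proof -
  have "emeasure M (Gam -` {..0} \<inter> space M)
      = (\<integral>\<^sup>+x. ennreal (gamma_dens (real m + \<delta>) x) * indicator {..0} x \<partial>lborel)"
    by (rule distributed_emeasure[OF Gam_distributed]) simp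
  also have "\<dots> = (\<integral>\<^sup>+x. 0 \<partial>(lborel :: real measure))"
    by (rule nn_integral_cong) (simp add: gamma_dens_def indicator_def)
  finally show ?thesis
    by (intro AE_I[where N = "Gam -` {..0} \<inter> space M"]) auto
qed

lemma kappa_pos: "\<kappa> > 0"
  using powr_less_one_of_less_one[of t "1 / (\<tau> - 1)"] t tau_gt_1 by (simp add: \<kappa>_def)

lemma cox_mean_eq: "cox_mean \<tau> t g B = g * \<kappa> * age_law B"
proof -
  define T where "T = t powr (1 / (\<tau> - 1))"
  have "T > 0" "T < 1"
    using powr_less_one_of_less_one[of t "1 / (\<tau> - 1)"] t tau_gt_1 by (simp_all add: T_def)
  then have "cox_intensity \<tau> t g x = g * \<kappa> * f_dens t \<tau> x" for x
    using tau_gt_1 by (simp add: cox_intensity_def f_dens_def \<kappa>_def mult_ac flip: T_def)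
  then show ?thesis
    by (simp add: cox_mean_def age_law_def)
qed

lemma integrable_age_density: "integrable lborel (f_dens t \<tau>)"
  using integrable_f_dens[OF tau_gt_1] t by simp

lemma age_law_UNIV: "age_law UNIV = 1"
  using integral_f_dens[OF tau_gt_1, of t] t by (simp add: age_law_def set_lebesgue_integral_def)

lemma age_law_finite_UN:
  assumes "finite S" "disjoint_family_on C S" "\<And>i. i \<in> S \<Longrightarrow> C i \<in> sets borel"
  shows "age_law (\<Union>i\<in>S. C i) = (\<Sum>i\<in>S. age_law (C i))"
proof -
  have "integrable lborel (\<lambda>x. indicator (C i) x * f_dens t \<tau> x)" if "i \<in> S" for i
    using integrable_real_mult_indicator[of "C i", OF _ integrable_age_density] assms(3)[OF that]
    by (simp add: mult.commute)
  then have "(\<integral>x. (\<Sum>i\<in>S. indicator (C i) x * f_dens t \<tau> x) \<partial>lborel) = (\<Sum>i\<in>S. age_law (C i))"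
    by (simp add: age_law_def set_lebesgue_integral_def)
  then show ?thesis
    by (simp add: age_law_def set_lebesgue_integral_def indicator_UN_disjoint[OF assms(1,2)]
        sum_distrib_right)
qed

lemma prob_young_counts:
  fixes C :: "'i \<Rightarrow> real set" and c :: "'i \<Rightarrow> nat"
  assumes S: "finite S" and disj: "disjoint_family_on C S" and C: "\<And>i. i \<in> S \<Longrightarrow> C i \<in> sets borel"
  shows "measure M {\<omega> \<in> space M. \<forall>i\<in>S. young_count m (N \<omega>) (A \<omega>) (C i) = c i}
       = (\<integral>\<omega>. (\<Prod>i\<in>S. poisson_prob (cox_mean \<tau> t (Gam \<omega>) (C i)) (c i)) \<partial>M)"
proof -
  obtain h where h: "bij_betw h {..<card S} S"
    using ex_bij_betw_nat_finite[OF S] by (auto simp: atLeast0LessThan)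
  have img: "h ` {..<card S} = S"
    using bij_betw_imp_surj_on[OF h] .
  have disj_h: "disjoint_family_on (C \<circ> h) {..<card S}"
    unfolding disjoint_family_on_def
  proof (intro ballI impI)
    fix i j assume "i \<in> {..<card S}" "j \<in> {..<card S}" "i \<noteq> j"
    then have "h i \<noteq> h j" "h i \<in> S" "h j \<in> S"
      using bij_betw_imp_inj_on[OF h] img by (auto simp: inj_on_eq_iff)
    then show "(C \<circ> h) i \<inter> (C \<circ> h) j = {}"
      using disj by (simp add: disjoint_family_on_def)
  qed
  have borel_h: "(C \<circ> h) i \<in> sets borel" if "i < card S" for i
    using C img that by auto
  have law: "measure M {\<omega> \<in> space M. \<forall>i<card S. young_count m (N \<omega>) (A \<omega>) (C (h i)) = c (h i)}
      = (\<integral>\<omega>. (\<Prod>i<card S. poisson_prob (cox_mean \<tau> t (Gam \<omega>) (C (h i))) (c (h i))) \<partial>M)"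
    using young_count_law[rule_format, where n = "card S" and B = "C \<circ> h" and c = "c \<circ> h"
        and G = UNIV, OF _ borel_h disj_h]
    by simp
  have "(\<forall>i\<in>h ` {..<card S}. P i) \<longleftrightarrow> (\<forall>i<card S. P (h i))" for P
    by auto
  then have "(\<forall>i\<in>S. P i) \<longleftrightarrow> (\<forall>i<card S. P (h i))" for P
    using img by simp
  then have "{\<omega> \<in> space M. \<forall>i\<in>S. young_count m (N \<omega>) (A \<omega>) (C i) = c i}
      = {\<omega> \<in> space M. \<forall>i<card S. young_count m (N \<omega>) (A \<omega>) (C (h i)) = c (h i)}"
    by (intro Collect_cong) simp
  moreover have "(\<Prod>i<card S. poisson_prob (cox_mean \<tau> t g (C (h i))) (c (h i)))
      = (\<Prod>i\<in>S. poisson_prob (cox_mean \<tau> t g (C i)) (c i))" for g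
    by (rule prod.reindex_bij_betw[OF h])
  ultimately show ?thesis
    using law by simp
qed

lemma prob_young_counts_partition:
  fixes C :: "'i \<Rightarrow> real set" and c :: "'i \<Rightarrow> nat"
  assumes S: "finite S" and disj: "disjoint_family_on C S" and C: "\<And>i. i \<in> S \<Longrightarrow> C i \<in> sets borel"
    and cover: "(\<Union>i\<in>S. C i) = UNIV"
  shows "measure M {\<omega> \<in> space M. \<forall>i\<in>S. young_count m (N \<omega>) (A \<omega>) (C i) = c i}
       = (\<integral>\<omega>. exp (- (Gam \<omega> * \<kappa>)) * (Gam \<omega> * \<kappa>) ^ sum c S \<partial>M)
         * (\<Prod>i\<in>S. age_law (C i) ^ c i / fact (c i))"
proof -
  have "(\<Sum>i\<in>S. age_law (C i)) = 1"
    using age_law_finite_UN[OF S disj C] cover age_law_UNIV by simp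
  then have "(\<Prod>i\<in>S. poisson_prob (cox_mean \<tau> t g (C i)) (c i))
      = exp (- (g * \<kappa>)) * (g * \<kappa>) ^ sum c S * (\<Prod>i\<in>S. age_law (C i) ^ c i / fact (c i))" for g
    using prod_poisson_prob[OF S, of "g * \<kappa>" "\<lambda>i. age_law (C i)" c] by (simp add: cox_mean_eq)
  then show ?thesis
    using prob_young_counts[OF S disj C, of c] by (simp add: integral_mult_left_zero)
qed

lemma prob_N_eq:
  "measure M {\<omega> \<in> space M. N \<omega> = n}
   = (\<integral>\<omega>. exp (- (Gam \<omega> * \<kappa>)) * (Gam \<omega> * \<kappa>) ^ n \<partial>M) / fact n"
  using prob_young_counts_partition[of "{()}" "\<lambda>_. UNIV" "\<lambda>_. n"]
  by (simp add: young_count_UNIV age_law_UNIV disjoint_family_on_def)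

lemma prob_young_counts_multinomial:
  fixes C :: "'i \<Rightarrow> real set" and c :: "'i \<Rightarrow> nat"
  assumes "finite S" "disjoint_family_on C S" "\<And>i. i \<in> S \<Longrightarrow> C i \<in> sets borel"
    and "(\<Union>i\<in>S. C i) = UNIV"
  shows "measure M {\<omega> \<in> space M. \<forall>i\<in>S. young_count m (N \<omega>) (A \<omega>) (C i) = c i}
       = measure M {\<omega> \<in> space M. N \<omega> = sum c S} * fact (sum c S)
         * (\<Prod>i\<in>S. age_law (C i) ^ c i / fact (c i))"
  using prob_young_counts_partition[OF assms, of c] prob_N_eq[of "sum c S"] by simp

lemma prob_N_pos: "measure M {\<omega> \<in> space M. N \<omega> = n} > 0"
proof -
  define X where "X = (\<lambda>\<omega>. poisson_prob (Gam \<omega> * \<kappa>) n)"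
  have eq: "measure M {\<omega> \<in> space M. N \<omega> = n} = integral\<^sup>L M X"
    using prob_young_counts[of "{()}" "\<lambda>_. UNIV" "\<lambda>_. n"]
    by (simp add: X_def young_count_UNIV cox_mean_eq age_law_UNIV disjoint_family_on_def)
  have X_pos: "AE \<omega> in M. 0 < X \<omega>"
    using Gam_pos_AE by eventually_elim (simp add: X_def kappa_pos poisson_prob_pos)
  then have X_nonneg: "AE \<omega> in M. 0 \<le> X \<omega>"
    by eventually_elim simp
  have X_int: "integrable M X"
  proof (rule integrable_const_bound[where B = 1])
    show "AE \<omega> in M. norm (X \<omega>) \<le> 1"
      using Gam_pos_AE
      by eventually_elim (simp add: X_def kappa_pos poisson_prob_le_1 abs_of_pos poisson_prob_pos)
  qed (simp add: X_def poisson_prob_def)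
  have "\<not> (AE \<omega> in M. X \<omega> = 0)"
  proof
    assume "AE \<omega> in M. X \<omega> = 0"
    with X_pos have "AE \<omega> in M. False"
      by eventually_elim simp
    then show False
      by simp
  qed
  then have "integral\<^sup>L M X \<noteq> 0"
    using integral_nonneg_eq_0_iff_AE[OF X_int X_nonneg] by simp
  moreover have "integral\<^sup>L M X \<ge> 0"
    using X_nonneg by (rule integral_nonneg_AE)
  ultimately show ?thesis
    using eq by simp
qed

end

section \<open>Cells of the partition generated by the sets B j\<close>

locale polya_root_cells = polya_root +
  fixes k :: nat and B :: "nat \<Rightarrow> real set"
  assumes k: "m < k" and B_borel [measurable]: "\<And>j. B j \<in> sets borel"
begin

definition n :: nat where "n = k - m"

definition J :: "nat set" where "J = {m+1..k}"

definition cell_of :: "real \<Rightarrow> nat set" where "cell_of x = {j \<in> J. x \<in> B j}"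

definition cell :: "nat set \<Rightarrow> real set" where "cell I = {x. cell_of x = I}"

definition cells where
  "cells \<omega> = map (\<lambda>i. cell_of (A \<omega> (m + 1 + i))) [0..<n]"

definition cell_lists :: "nat set list set" where
  "cell_lists = {xs. set xs \<subseteq> Pow J \<and> length xs = n}"

\<comment> \<open>For \<open>xs \<in> cell_lists\<close> this is the event \<open>N = n \<and> cells = xs\<close> (\<open>cells_event_eq\<close>),
  written so that it is visibly measurable.\<close>
definition cells_event where
  "cells_event xs = {\<omega> \<in> space M. N \<omega> = n \<and> (\<forall>i<n. A \<omega> (m + 1 + i) \<in> cell (xs ! i))}"

lemma J_eq_image: "J = (\<lambda>i. m + 1 + i) ` {..<n}"
proof -
  have "j \<in> (\<lambda>i. m + 1 + i) ` {..<n}" if "j \<in> J" for j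
    using that by (intro image_eqI[of _ _ "j - m - 1"]) (auto simp: J_def n_def)
  then show ?thesis
    by (auto simp: J_def n_def)
qed

lemma finite_J: "finite J"
  by (simp add: J_def)

lemma cell_of_subset: "cell_of x \<subseteq> J"
  by (auto simp: cell_of_def)

lemma cell_eq: "I \<subseteq> J \<Longrightarrow> cell I = (\<Inter>j\<in>J. if j \<in> I then B j else - B j)"
  by (auto simp: cell_def cell_of_def)

lemma cell_empty: "\<not> I \<subseteq> J \<Longrightarrow> cell I = {}"
  using cell_of_subset by (auto simp: cell_def)

lemma cell_borel [measurable]: "cell I \<in> sets borel"
proof (cases "I \<subseteq> J")
  case True
  have "J \<noteq> {}"
    using k by (auto simp: J_def)
  then show ?thesis
    unfolding cell_eq[OF True] using finite_J by (intro sets.finite_INT) auto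
qed (simp add: cell_empty)

lemma disjoint_family_on_cell: "disjoint_family_on cell S"
  by (auto simp: disjoint_family_on_def cell_def)

lemma UN_cell: "(\<Union>I\<in>Pow J. cell I) = UNIV"
  using cell_of_subset by (auto simp: cell_def)

lemma age_law_B_eq_sum_cells:
  assumes "j \<in> J"
  shows "age_law (B j) = (\<Sum>I\<in>Pow J. if j \<in> I then age_law (cell I) else 0)"
proof -
  have "B j = (\<Union>I\<in>{I \<in> Pow J. j \<in> I}. cell I)"
    using assms by (auto simp: cell_def cell_of_def)
  then have "age_law (B j) = (\<Sum>I\<in>{I \<in> Pow J. j \<in> I}. age_law (cell I))"
    using age_law_finite_UN[of "{I \<in> Pow J. j \<in> I}" cell] finite_J disjoint_family_on_cell
    by simp
  also have "\<dots> = (\<Sum>I\<in>Pow J. if j \<in> I then age_law (cell I) else 0)"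
    using finite_J by (intro sum.inter_filter) simp
  finally show ?thesis .
qed

lemma finite_cell_lists: "finite cell_lists"
  using finite_lists_length_eq[of "Pow J" n] finite_J by (simp add: cell_lists_def)

lemma cells_in_cell_lists: "cells \<omega> \<in> cell_lists"
  using cell_of_subset by (auto simp: cells_def cell_lists_def)

lemma nth_cells: "i < n \<Longrightarrow> cells \<omega> ! i = cell_of (A \<omega> (m + 1 + i))"
  by (simp add: cells_def)

lemma cells_event_sets: "cells_event xs \<in> sets M"
  unfolding cells_event_def by measurable

lemma cells_event_eq:
  assumes "xs \<in> cell_lists"
  shows "cells_event xs = {\<omega> \<in> space M. N \<omega> = n \<and> cells \<omega> = xs}"
proof -
  have "(\<forall>i<n. A \<omega> (m + 1 + i) \<in> cell (xs ! i)) \<longleftrightarrow> cells \<omega> = xs" for \<omega>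
    using assms cells_in_cell_lists[of \<omega>]
    by (auto simp: cell_def nth_cells cell_lists_def list_eq_iff_nth_eq)
  then show ?thesis
    by (simp add: cells_event_def)
qed

lemma measure_cells_sum:
  "measure M {\<omega> \<in> space M. N \<omega> = n \<and> P (cells \<omega>)}
   = (\<Sum>xs | xs \<in> cell_lists \<and> P xs. measure M (cells_event xs))"
proof -
  have "{\<omega> \<in> space M. N \<omega> = n \<and> P (cells \<omega>)} = (\<Union>xs\<in>{xs \<in> cell_lists. P xs}. cells_event xs)"
    using cells_in_cell_lists by (auto simp: cells_event_eq)
  moreover have "disjoint_family_on cells_event {xs \<in> cell_lists. P xs}"
    by (auto simp: disjoint_family_on_def cells_event_eq)
  ultimately show ?thesis
    using finite_cell_lists cells_event_sets
    by (simp add: measure_finite_Union emeasure_finite image_subset_iff)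
qed

lemma young_count_cell:
  assumes "N \<omega> = n"
  shows "young_count m n (A \<omega>) (cell I) = count (mset (cells \<omega>)) I"
proof -
  have "count (mset (cells \<omega>)) I = card {i. i < length (cells \<omega>) \<and> I = cells \<omega> ! i}"
    unfolding count_mset count_list_eq_length_filter length_filter_conv_card by simp
  also have "{i. i < length (cells \<omega>) \<and> I = cells \<omega> ! i}
      = {i. i < n \<and> cell_of (A \<omega> (m + 1 + i)) = I}"
    by (auto simp: cells_def)
  also have "card \<dots> = card ((\<lambda>i. m + 1 + i) ` {i. i < n \<and> cell_of (A \<omega> (m + 1 + i)) = I})"
    by (rule card_image[symmetric]) (simp add: inj_on_def)
  also have "(\<lambda>i. m + 1 + i) ` {i. i < n \<and> cell_of (A \<omega> (m + 1 + i)) = I}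
      = {j. m < j \<and> j \<le> m + N \<omega> \<and> A \<omega> j \<in> cell I}"
  proof -
    have "j \<in> (\<lambda>i. m + 1 + i) ` {i. i < n \<and> cell_of (A \<omega> (m + 1 + i)) = I}"
      if "m < j" "j \<le> m + n" "cell_of (A \<omega> j) = I" for j
      using that by (intro image_eqI[of _ _ "j - m - 1"]) auto
    then show ?thesis
      using assms by (auto simp: cell_def)
  qed
  finally show ?thesis
    using assms by (simp add: young_count_def)
qed

lemma sum_young_count_cells: "(\<Sum>I\<in>Pow J. young_count m N' a (cell I)) = N'"
proof -
  have "(\<Sum>I\<in>Pow J. young_count m N' a (cell I))
      = card (\<Union>I\<in>Pow J. {j. m < j \<and> j \<le> m + N' \<and> a j \<in> cell I})"
    unfolding young_count_def
    by (rule card_UN_disjoint[symmetric]) (use finite_J in \<open>auto simp: cell_def\<close>)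
  also have "(\<Union>I\<in>Pow J. {j. m < j \<and> j \<le> m + N' \<and> a j \<in> cell I}) = {m<..m + N'}"
  proof -
    have "j \<in> (\<Union>I\<in>Pow J. {j. m < j \<and> j \<le> m + N' \<and> a j \<in> cell I})"
      if "m < j" "j \<le> m + N'" for j
      using that cell_of_subset[of "a j"] by (intro UN_I[of "cell_of (a j)"]) (auto simp: cell_def)
    then show ?thesis
      by auto
  qed
  finally show ?thesis
    by simp
qed

lemma cells_mset_event:
  assumes X: "set_mset X \<subseteq> Pow J" "size X = n"
  shows "{\<omega> \<in> space M. N \<omega> = n \<and> mset (cells \<omega>) = X}
       = {\<omega> \<in> space M. \<forall>I\<in>Pow J. young_count m (N \<omega>) (A \<omega>) (cell I) = count X I}"
proof (intro equalityI subsetI)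
  fix \<omega> assume \<omega>: "\<omega> \<in> {\<omega> \<in> space M. \<forall>I\<in>Pow J. young_count m (N \<omega>) (A \<omega>) (cell I) = count X I}"
  then have "N \<omega> = (\<Sum>I\<in>Pow J. count X I)"
    using sum_young_count_cells[of "N \<omega>" "A \<omega>"] by simp
  then have N\<omega>: "N \<omega> = n"
    using sum_count_eq_size[of "Pow J" X] finite_J X by simp
  have "count (mset (cells \<omega>)) I = count X I" for I
  proof (cases "I \<in> Pow J")
    case False
    then have "I \<notin> set (cells \<omega>)" "I \<notin># X"
      using cells_in_cell_lists[of \<omega>] X by (auto simp: cell_lists_def)
    then show ?thesis
      by (simp add: not_in_iff)
  qed (use \<omega> N\<omega> young_count_cell[OF N\<omega>] in auto)
  then show "\<omega> \<in> {\<omega> \<in> space M. N \<omega> = n \<and> mset (cells \<omega>) = X}"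
    using \<omega> N\<omega> by (auto intro: multiset_eqI)
next
  fix \<omega> assume "\<omega> \<in> {\<omega> \<in> space M. N \<omega> = n \<and> mset (cells \<omega>) = X}"
  then show "\<omega> \<in> {\<omega> \<in> space M. \<forall>I\<in>Pow J. young_count m (N \<omega>) (A \<omega>) (cell I) = count X I}"
    using young_count_cell[of \<omega>] by auto
qed

lemma prob_cells_mset:
  assumes X: "set_mset X \<subseteq> Pow J" "size X = n"
  shows "measure M {\<omega> \<in> space M. N \<omega> = n \<and> mset (cells \<omega>) = X}
       = measure M {\<omega> \<in> space M. N \<omega> = n} * fact n
         * (\<Prod>I\<in>set_mset X. age_law (cell I) ^ count X I / fact (count X I))"
proof -
  have "(\<Prod>I\<in>Pow J. age_law (cell I) ^ count X I / fact (count X I))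
      = (\<Prod>I\<in>set_mset X. age_law (cell I) ^ count X I / fact (count X I))"
    by (rule prod.mono_neutral_right) (use X finite_J in \<open>auto simp: not_in_iff\<close>)
  then show ?thesis
    using prob_young_counts_multinomial[of "Pow J" cell "count X"] X
      finite_J disjoint_family_on_cell UN_cell sum_count_eq_size[of "Pow J" X]
    by (simp add: cells_mset_event)
qed

lemma sum_measure_cells_event_fibre:
  assumes "ys \<in> cell_lists"
  shows "(\<Sum>xs | xs \<in> cell_lists \<and> mset xs = mset ys. measure M (cells_event xs))
       = (\<Sum>xs | xs \<in> cell_lists \<and> mset xs = mset ys.
            measure M {\<omega> \<in> space M. N \<omega> = n} * prod_list (map (\<lambda>I. age_law (cell I)) xs))"
proof -
  have X: "set_mset (mset ys) \<subseteq> Pow J" "size (mset ys) = n"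
    using assms by (auto simp: cell_lists_def)
  have perms: "{xs. xs \<in> cell_lists \<and> mset xs = mset ys} = permutations_of_multiset (mset ys)"
    using X by (auto simp: cell_lists_def permutations_of_multiset_def
        simp flip: set_mset_mset size_mset)
  have "(\<Sum>xs | xs \<in> cell_lists \<and> mset xs = mset ys. measure M (cells_event xs))
      = measure M {\<omega> \<in> space M. N \<omega> = n \<and> mset (cells \<omega>) = mset ys}"
    using measure_cells_sum[of "\<lambda>xs. mset xs = mset ys"] by simp
  also have "\<dots> = measure M {\<omega> \<in> space M. N \<omega> = n}
      * (\<Sum>xs\<in>permutations_of_multiset (mset ys). prod_list (map (\<lambda>I. age_law (cell I)) xs))"
    using prob_cells_mset[OF X] sum_prod_list_permutations_of_multiset[of "\<lambda>I. age_law (cell I)" "mset ys"] X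
    by (simp add: mult.assoc)
  also have "\<dots> = (\<Sum>xs | xs \<in> cell_lists \<and> mset xs = mset ys.
      measure M {\<omega> \<in> space M. N \<omega> = n} * prod_list (map (\<lambda>I. age_law (cell I)) xs))"
    by (simp add: perms sum_distrib_left)
  finally show ?thesis .
qed

section \<open>Symmetrisation by a uniform random permutation\<close>

\<comment> \<open>\<open>matches \<sigma> (cells \<omega>)\<close>: the age of child \<open>m + 1 + \<sigma> i\<close> lies in \<open>B (m + 1 + i)\<close>
  for every \<open>i < n\<close>.\<close>
definition matches :: "(nat \<Rightarrow> nat) \<Rightarrow> nat set list \<Rightarrow> bool" where
  "matches \<sigma> xs \<longleftrightarrow> (\<forall>i<n. m + 1 + i \<in> xs ! \<sigma> i)"

lemma measure_matches:
  assumes \<sigma>: "\<sigma> permutes {..<n}"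
  shows "measure M {\<omega> \<in> space M. N \<omega> = n \<and> (\<forall>i<n. A \<omega> (m + 1 + \<sigma> i) \<in> B (m + 1 + i))}
       = (\<Sum>xs | xs \<in> cell_lists \<and> matches \<sigma> xs. measure M (cells_event xs))"
proof -
  have "matches \<sigma> (cells \<omega>) \<longleftrightarrow> (\<forall>i<n. A \<omega> (m + 1 + \<sigma> i) \<in> B (m + 1 + i))" for \<omega>
  proof -
    have "m + 1 + i \<in> cells \<omega> ! \<sigma> i \<longleftrightarrow> A \<omega> (m + 1 + \<sigma> i) \<in> B (m + 1 + i)" if "i < n" for i
      using that permutes_in_image[OF \<sigma>, of i] J_eq_image by (auto simp: nth_cells cell_of_def)
    then show ?thesis
      by (simp add: matches_def)
  qed
  then show ?thesis
    using measure_cells_sum[of "matches \<sigma>"] by simp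
qed

lemma matches_count_mset_invariant:
  assumes "xs \<in> cell_lists" "ys \<in> cell_lists" "mset xs = mset ys"
  shows "card {\<sigma>. \<sigma> permutes {..<n} \<and> matches \<sigma> xs} = card {\<sigma>. \<sigma> permutes {..<n} \<and> matches \<sigma> ys}"
  using card_permutes_nth_mset_invariant[of xs n ys "\<lambda>i I. m + 1 + i \<in> I"] assms
  by (simp add: matches_def cell_lists_def)

lemma sum_matches_swap:
  "(\<Sum>xs\<in>cell_lists. real (card {\<sigma>. \<sigma> permutes {..<n} \<and> matches \<sigma> xs}) * f xs)
   = (\<Sum>\<sigma> | \<sigma> permutes {..<n}. \<Sum>xs | xs \<in> cell_lists \<and> matches \<sigma> xs. f xs)"
proof -
  have perms: "finite {\<sigma>. \<sigma> permutes {..<n}}"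
    by (simp add: finite_permutations)
  have row: "real (card {\<sigma>. \<sigma> permutes {..<n} \<and> matches \<sigma> xs}) * f xs
      = (\<Sum>\<sigma>\<in>{\<sigma>. \<sigma> permutes {..<n}}. if matches \<sigma> xs then f xs else 0)" for xs
    using sum.inter_filter[OF perms, of "\<lambda>_. f xs" "\<lambda>\<sigma>. matches \<sigma> xs"] by simp
  have "(\<Sum>xs\<in>cell_lists. real (card {\<sigma>. \<sigma> permutes {..<n} \<and> matches \<sigma> xs}) * f xs)
      = (\<Sum>xs\<in>cell_lists. \<Sum>\<sigma>\<in>{\<sigma>. \<sigma> permutes {..<n}}. if matches \<sigma> xs then f xs else 0)"
    by (simp only: row)
  also have "\<dots> = (\<Sum>\<sigma>\<in>{\<sigma>. \<sigma> permutes {..<n}}. \<Sum>xs\<in>cell_lists. if matches \<sigma> xs then f xs else 0)"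
    by (rule sum.swap)
  also have "\<dots> = (\<Sum>\<sigma> | \<sigma> permutes {..<n}. \<Sum>xs | xs \<in> cell_lists \<and> matches \<sigma> xs. f xs)"
    by (rule sum.cong[OF refl], rule sum.inter_filter[OF finite_cell_lists, symmetric])
  finally show ?thesis .
qed

lemma prod_list_if_matches:
  assumes \<sigma>: "\<sigma> permutes {..<n}" and xs: "xs \<in> cell_lists"
  shows "(if matches \<sigma> xs then prod_list (map (\<lambda>I. age_law (cell I)) xs) else 0)
       = (\<Prod>i<n. if m + 1 + inv \<sigma> i \<in> xs ! i then age_law (cell (xs ! i)) else 0)"
proof -
  have "prod_list (map (\<lambda>I. age_law (cell I)) xs) = (\<Prod>i<n. age_law (cell (xs ! \<sigma> i)))"
    using xs prod.reindex_bij_betw[OF permutes_imp_bij[OF \<sigma>], of "\<lambda>i. age_law (cell (xs ! i))"]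
    by (simp add: prod.list_conv_set_nth cell_lists_def atLeast0LessThan)
  then have "(if matches \<sigma> xs then prod_list (map (\<lambda>I. age_law (cell I)) xs) else 0)
      = (\<Prod>i<n. if m + 1 + i \<in> xs ! \<sigma> i then age_law (cell (xs ! \<sigma> i)) else 0)"
    by (simp add: prod_if_else_zero matches_def)
  also have "\<dots> = (\<Prod>i<n. if m + 1 + inv \<sigma> i \<in> xs ! i then age_law (cell (xs ! i)) else 0)"
    using prod.permutes_inv[OF \<sigma>, of "\<lambda>a i. if m + 1 + i \<in> xs ! a then age_law (cell (xs ! a)) else 0"]
    by simp
  finally show ?thesis .
qed

lemma sum_matches_prod_list:
  assumes \<sigma>: "\<sigma> permutes {..<n}"
  shows "(\<Sum>xs | xs \<in> cell_lists \<and> matches \<sigma> xs. prod_list (map (\<lambda>I. age_law (cell I)) xs))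
       = (\<Prod>j\<in>J. age_law (B j))"
proof -
  define h where "h i I = (if m + 1 + inv \<sigma> i \<in> I then age_law (cell I) else 0)" for i I
  have "(\<Sum>xs | xs \<in> cell_lists \<and> matches \<sigma> xs. prod_list (map (\<lambda>I. age_law (cell I)) xs))
      = (\<Sum>xs\<in>cell_lists. \<Prod>i<n. h i (xs ! i))"
    by (simp add: sum.inter_filter finite_cell_lists prod_list_if_matches[OF \<sigma>] h_def
        cong: sum.cong)
  also have "\<dots> = (\<Prod>i<n. \<Sum>I\<in>Pow J. h i I)"
    unfolding cell_lists_def by (rule sum_lists_length_eq_prod_nth) (simp add: finite_J)
  also have "\<dots> = (\<Prod>i<n. age_law (B (m + 1 + inv \<sigma> i)))"
  proof (rule prod.cong)
    fix i assume "i \<in> {..<n}"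
    then have "m + 1 + inv \<sigma> i \<in> J"
      using permutes_in_image[OF permutes_inv[OF \<sigma>], of i] J_eq_image by auto
    then show "(\<Sum>I\<in>Pow J. h i I) = age_law (B (m + 1 + inv \<sigma> i))"
      using age_law_B_eq_sum_cells by (simp add: h_def)
  qed simp
  also have "\<dots> = (\<Prod>i<n. age_law (B (m + 1 + i)))"
    by (rule prod.reindex_bij_betw[OF permutes_imp_bij[OF permutes_inv[OF \<sigma>]]])
  also have "\<dots> = (\<Prod>j\<in>J. age_law (B j))"
    unfolding J_eq_image by (subst prod.reindex) (simp_all add: inj_on_def)
  finally show ?thesis .
qed

lemma sum_permutes_measure:
  "(\<Sum>\<sigma> | \<sigma> permutes {..<n}.
      measure M {\<omega> \<in> space M. N \<omega> = n \<and> (\<forall>i<n. A \<omega> (m + 1 + \<sigma> i) \<in> B (m + 1 + i))})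
   = fact n * measure M {\<omega> \<in> space M. N \<omega> = n} * (\<Prod>j\<in>J. age_law (B j))"
proof -
  let ?G = "\<lambda>xs. real (card {\<sigma>. \<sigma> permutes {..<n} \<and> matches \<sigma> xs})"
  let ?P = "measure M {\<omega> \<in> space M. N \<omega> = n}"
  have "(\<Sum>\<sigma> | \<sigma> permutes {..<n}.
        measure M {\<omega> \<in> space M. N \<omega> = n \<and> (\<forall>i<n. A \<omega> (m + 1 + \<sigma> i) \<in> B (m + 1 + i))})
      = (\<Sum>\<sigma> | \<sigma> permutes {..<n}. \<Sum>xs | xs \<in> cell_lists \<and> matches \<sigma> xs. measure M (cells_event xs))"
    by (rule sum.cong[OF refl], rule measure_matches) simp
  also have "\<dots> = (\<Sum>xs\<in>cell_lists. ?G xs * measure M (cells_event xs))"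
    by (rule sum_matches_swap[symmetric])
  also have "\<dots> = (\<Sum>xs\<in>cell_lists. ?G xs * (?P * prod_list (map (\<lambda>I. age_law (cell I)) xs)))"
  \<comment> \<open>The law of the cell list is only known through its multiset, and the weight \<open>?G\<close> is a
    function of that multiset.\<close>
  proof (rule sum_mult_eq_if_fibre_sums_eq[where f = mset])
    show "finite cell_lists"
      by (rule finite_cell_lists)
    show "?G xs = ?G ys" if "xs \<in> cell_lists" "ys \<in> cell_lists" "mset xs = mset ys" for xs ys
      using matches_count_mset_invariant[OF that] by simp
    show "(\<Sum>ys | ys \<in> cell_lists \<and> mset ys = mset xs. measure M (cells_event ys))
        = (\<Sum>ys | ys \<in> cell_lists \<and> mset ys = mset xs.
            ?P * prod_list (map (\<lambda>I. age_law (cell I)) ys))" if "xs \<in> cell_lists" for xs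
      using sum_measure_cells_event_fibre[OF that] .
  qed
  also have "\<dots> = (\<Sum>\<sigma> | \<sigma> permutes {..<n}.
      ?P * (\<Sum>xs | xs \<in> cell_lists \<and> matches \<sigma> xs. prod_list (map (\<lambda>I. age_law (cell I)) xs)))"
    by (simp add: sum_matches_swap sum_distrib_left)
  also have "\<dots> = (\<Sum>\<sigma> | \<sigma> permutes {..<n}. ?P * (\<Prod>j\<in>J. age_law (B j)))"
    by (rule sum.cong[OF refl]) (simp add: sum_matches_prod_list)
  also have "\<dots> = fact n * ?P * (\<Prod>j\<in>J. age_law (B j))"
    by (simp add: card_permutations[of "{..<n}" n])
  finally show ?thesis .
qed

lemma sum_permutes_J_eq:
  "(\<Sum>\<sigma> | \<sigma> permutes J. g (\<lambda>i. \<sigma> (m + 1 + i))) = (\<Sum>\<sigma> | \<sigma> permutes {..<n}. g (\<lambda>i. m + 1 + \<sigma> i))"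
proof -
  define f where "f i = m + 1 + i" for i
  have f: "bij_betw f {..<n} J"
    unfolding J_eq_image f_def by (rule bij_betw_imageI) (simp_all add: inj_on_def)
  define T where "T \<sigma> = (\<lambda>x. if x \<in> J then f (\<sigma> (inv_into {..<n} f x)) else x)" for \<sigma> :: "nat \<Rightarrow> nat"
  have T: "bij_betw T {\<sigma>. \<sigma> permutes {..<n}} {\<sigma>. \<sigma> permutes J}"
    unfolding T_def by (rule bij_betw_permutations[OF f])
  have T_shift: "(\<lambda>i. T \<sigma> (m + 1 + i)) = (\<lambda>i. m + 1 + \<sigma> i)" if "\<sigma> permutes {..<n}" for \<sigma>
  proof
    fix i
    show "T \<sigma> (m + 1 + i) = m + 1 + \<sigma> i"
    proof (cases "i < n")
      case True
      then have "T \<sigma> (f i) = f (\<sigma> i)"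
        using bij_betw_apply[OF f] inv_into_f_f[OF bij_betw_imp_inj_on[OF f]] by (simp add: T_def)
      then show ?thesis
        by (simp add: f_def)
    next
      case False
      then have "m + 1 + i \<notin> J"
        by (simp add: J_def n_def)
      then show ?thesis
        using permutes_not_in[OF that, of i] False by (simp add: T_def)
    qed
  qed
  have "(\<Sum>\<sigma> | \<sigma> permutes J. g (\<lambda>i. \<sigma> (m + 1 + i)))
      = (\<Sum>\<sigma> | \<sigma> permutes {..<n}. g (\<lambda>i. T \<sigma> (m + 1 + i)))"
    by (rule sum.reindex_bij_betw[OF T, symmetric])
  also have "\<dots> = (\<Sum>\<sigma> | \<sigma> permutes {..<n}. g (\<lambda>i. m + 1 + \<sigma> i))"
    by (rule sum.cong[OF refl], rule arg_cong[where f = g], rule T_shift) simp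
  finally show ?thesis .
qed

lemma prob_permuted_ages_eq_sum:
  fixes \<pi> :: "_ \<Rightarrow> nat \<Rightarrow> nat"
  assumes \<pi>_meas: "\<pi> \<in> measurable M (count_space UNIV)"
    and \<pi>_perm: "\<forall>\<omega>\<in>space M. \<pi> \<omega> permutes J"
    and \<pi>_unif: "\<forall>\<sigma>. \<sigma> permutes J \<longrightarrow> measure M {\<omega> \<in> space M. \<pi> \<omega> = \<sigma>} = 1 / fact n"
    and \<pi>_indep: "\<forall>\<sigma> E. E \<in> sets (borel \<Otimes>\<^sub>M count_space UNIV \<Otimes>\<^sub>M Pi\<^sub>M UNIV (\<lambda>_. borel)) \<longrightarrow>
                    measure M {\<omega> \<in> space M. \<pi> \<omega> = \<sigma> \<and> (Gam \<omega>, N \<omega>, A \<omega>) \<in> E}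
                    = measure M {\<omega> \<in> space M. \<pi> \<omega> = \<sigma>}
                      * measure M {\<omega> \<in> space M. (Gam \<omega>, N \<omega>, A \<omega>) \<in> E}"
  shows "measure M {\<omega> \<in> space M. N \<omega> = n \<and> (\<forall>j\<in>J. A \<omega> (\<pi> \<omega> j) \<in> B j)}
       = (\<Sum>\<sigma> | \<sigma> permutes J. measure M {\<omega> \<in> space M. N \<omega> = n \<and> (\<forall>j\<in>J. A \<omega> (\<sigma> j) \<in> B j)})
         / fact n"
proof -
  define Ev where "Ev \<sigma> = {\<omega> \<in> space M. N \<omega> = n \<and> (\<forall>j\<in>J. A \<omega> (\<sigma> j) \<in> B j)}" for \<sigma>
  define F where "F \<sigma> = {\<omega> \<in> space M. \<pi> \<omega> = \<sigma>} \<inter> Ev \<sigma>" for \<sigma>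
  have F_sets: "F \<sigma> \<in> sets M" for \<sigma>
  proof -
    have "{\<omega> \<in> space M. \<pi> \<omega> = \<sigma>} = \<pi> -` {\<sigma>} \<inter> space M"
      by auto
    then show ?thesis
      using measurable_sets[OF \<pi>_meas, of "{\<sigma>}"] finite_J by (simp add: F_def Ev_def) measurable
  qed
  have F_measure: "measure M (F \<sigma>) = measure M (Ev \<sigma>) / fact n" if "\<sigma> permutes J" for \<sigma>
  proof -
    define E :: "(real \<times> nat \<times> (nat \<Rightarrow> real)) set"
      where "E = {x \<in> space (borel \<Otimes>\<^sub>M count_space UNIV \<Otimes>\<^sub>M Pi\<^sub>M UNIV (\<lambda>_. borel)).
        fst (snd x) = n \<and> (\<forall>j\<in>J. snd (snd x) (\<sigma> j) \<in> B j)}"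
    have "E \<in> sets (borel \<Otimes>\<^sub>M count_space UNIV \<Otimes>\<^sub>M Pi\<^sub>M UNIV (\<lambda>_. borel))"
      unfolding E_def using finite_J by measurable
    moreover have "F \<sigma> = {\<omega> \<in> space M. \<pi> \<omega> = \<sigma> \<and> (Gam \<omega>, N \<omega>, A \<omega>) \<in> E}"
      "Ev \<sigma> = {\<omega> \<in> space M. (Gam \<omega>, N \<omega>, A \<omega>) \<in> E}"
      by (auto simp: F_def Ev_def E_def space_pair_measure space_PiM)
    ultimately show ?thesis
      using \<pi>_indep \<pi>_unif that by simp
  qed
  have "{\<omega> \<in> space M. N \<omega> = n \<and> (\<forall>j\<in>J. A \<omega> (\<pi> \<omega> j) \<in> B j)} = (\<Union>\<sigma>\<in>{\<sigma>. \<sigma> permutes J}. F \<sigma>)"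
    using \<pi>_perm by (auto simp: F_def Ev_def)
  moreover have "disjoint_family_on F {\<sigma>. \<sigma> permutes J}"
    by (auto simp: disjoint_family_on_def F_def)
  moreover have "finite {\<sigma>. \<sigma> permutes J}"
    using finite_J by (rule finite_permutations)
  ultimately have "measure M {\<omega> \<in> space M. N \<omega> = n \<and> (\<forall>j\<in>J. A \<omega> (\<pi> \<omega> j) \<in> B j)}
      = (\<Sum>\<sigma> | \<sigma> permutes J. measure M (F \<sigma>))"
    using F_sets by (simp add: measure_finite_Union emeasure_finite image_subset_iff)
  then show ?thesis
    by (simp add: F_measure sum_divide_distrib Ev_def)
qed

lemma prob_permuted_ages:
  fixes \<pi> :: "_ \<Rightarrow> nat \<Rightarrow> nat"
  assumes \<pi>_meas: "\<pi> \<in> measurable M (count_space UNIV)"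
    and \<pi>_perm: "\<forall>\<omega>\<in>space M. \<pi> \<omega> permutes J"
    and \<pi>_unif: "\<forall>\<sigma>. \<sigma> permutes J \<longrightarrow> measure M {\<omega> \<in> space M. \<pi> \<omega> = \<sigma>} = 1 / fact n"
    and \<pi>_indep: "\<forall>\<sigma> E. E \<in> sets (borel \<Otimes>\<^sub>M count_space UNIV \<Otimes>\<^sub>M Pi\<^sub>M UNIV (\<lambda>_. borel)) \<longrightarrow>
                    measure M {\<omega> \<in> space M. \<pi> \<omega> = \<sigma> \<and> (Gam \<omega>, N \<omega>, A \<omega>) \<in> E}
                    = measure M {\<omega> \<in> space M. \<pi> \<omega> = \<sigma>}
                      * measure M {\<omega> \<in> space M. (Gam \<omega>, N \<omega>, A \<omega>) \<in> E}"
  shows "measure M {\<omega> \<in> space M. N \<omega> = n \<and> (\<forall>j\<in>J. A \<omega> (\<pi> \<omega> j) \<in> B j)}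
       = measure M {\<omega> \<in> space M. N \<omega> = n} * (\<Prod>j\<in>J. age_law (B j))"
proof -
  have "{\<omega> \<in> space M. N \<omega> = n \<and> (\<forall>j\<in>J. A \<omega> (\<sigma> j) \<in> B j)}
      = {\<omega> \<in> space M. N \<omega> = n \<and> (\<forall>i<n. A \<omega> (\<sigma> (m + 1 + i)) \<in> B (m + 1 + i))}" for \<sigma>
    unfolding J_eq_image by auto
  then have "(\<Sum>\<sigma> | \<sigma> permutes J. measure M {\<omega> \<in> space M. N \<omega> = n \<and> (\<forall>j\<in>J. A \<omega> (\<sigma> j) \<in> B j)})
      = (\<Sum>\<sigma> | \<sigma> permutes {..<n}.
          measure M {\<omega> \<in> space M. N \<omega> = n \<and> (\<forall>i<n. A \<omega> (m + 1 + \<sigma> i) \<in> B (m + 1 + i))})"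
    using sum_permutes_J_eq[of "\<lambda>s. measure M {\<omega> \<in> space M. N \<omega> = n \<and> (\<forall>i<n. A \<omega> (s i) \<in> B (m + 1 + i))}"]
    by simp
  then show ?thesis
    using prob_permuted_ages_eq_sum[OF assms] sum_permutes_measure by simp
qed

end

theorem mainTheorem8:
  fixes M :: "'w measure" and m k :: nat and \<delta> t :: real
    and Gam :: "'w \<Rightarrow> real" and N :: "'w \<Rightarrow> nat" and A :: "'w \<Rightarrow> nat \<Rightarrow> real"
    and \<pi> :: "'w \<Rightarrow> nat \<Rightarrow> nat"
  assumes m: "m \<ge> 1" and \<delta>: "\<delta> > - real m" and k: "k > m" and t: "0 < t" "t < 1"
    and root: "polya_root_younger M m \<delta> t Gam N A"
    and \<pi>_meas: "\<pi> \<in> measurable M (count_space UNIV)"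
    and \<pi>_perm: "\<forall>\<omega>\<in>space M. \<pi> \<omega> permutes {m+1..k}"
    and \<pi>_unif: "\<forall>\<sigma>. \<sigma> permutes {m+1..k} \<longrightarrow>
                    measure M {\<omega> \<in> space M. \<pi> \<omega> = \<sigma>} = 1 / fact (k - m)"
    and \<pi>_indep: "\<forall>\<sigma> E. E \<in> sets (borel \<Otimes>\<^sub>M count_space UNIV \<Otimes>\<^sub>M Pi\<^sub>M UNIV (\<lambda>_. borel)) \<longrightarrow>
                    measure M {\<omega> \<in> space M. \<pi> \<omega> = \<sigma> \<and> (Gam \<omega>, N \<omega>, A \<omega>) \<in> E}
                    = measure M {\<omega> \<in> space M. \<pi> \<omega> = \<sigma>}
                      * measure M {\<omega> \<in> space M. (Gam \<omega>, N \<omega>, A \<omega>) \<in> E}"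
  shows "measure M {\<omega> \<in> space M. m + N \<omega> = k} > 0
       \<and> (\<forall>B :: nat \<Rightarrow> real set. (\<forall>j. B j \<in> sets borel) \<longrightarrow>
            measure M {\<omega> \<in> space M. m + N \<omega> = k \<and> (\<forall>j\<in>{m+1..k}. A \<omega> (\<pi> \<omega> j) \<in> B j)}
              / measure M {\<omega> \<in> space M. m + N \<omega> = k}
            = (\<Prod>j\<in>{m+1..k}. LINT x:B j|lborel. f_dens t (tau_par m \<delta>) x))
       \<and> (\<forall>s::real. 0 < s \<and> s < 1 \<longrightarrow> (\<forall>x::real.
            (LINT y:{x..}|lborel. f_dens 0 (tau_par m \<delta>) y)
              \<le> (LINT y:{x..}|lborel. f_dens s (tau_par m \<delta>) y)))"
proof -
  interpret polya_root M m \<delta> t Gam N A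
    using m \<delta> t root by (intro polya_root.intro polya_root_axioms.intro) (simp_all add: polya_root_younger_def)
  have N_eq: "{\<omega> \<in> space M. m + N \<omega> = k} = {\<omega> \<in> space M. N \<omega> = k - m}"
    using k by auto
  have pos: "measure M {\<omega> \<in> space M. m + N \<omega> = k} > 0"
    unfolding N_eq by (rule prob_N_pos)
  have "measure M {\<omega> \<in> space M. m + N \<omega> = k \<and> (\<forall>j\<in>{m+1..k}. A \<omega> (\<pi> \<omega> j) \<in> B j)}
      / measure M {\<omega> \<in> space M. m + N \<omega> = k}
      = (\<Prod>j\<in>{m+1..k}. LINT x:B j|lborel. f_dens t (tau_par m \<delta>) x)"
    if "\<forall>j. B j \<in> sets borel" for B
  proof -
    interpret polya_root_cells M m \<delta> t Gam N A k B
      using k that by unfold_locales auto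
    have "{\<omega> \<in> space M. m + N \<omega> = k \<and> (\<forall>j\<in>{m+1..k}. A \<omega> (\<pi> \<omega> j) \<in> B j)}
        = {\<omega> \<in> space M. N \<omega> = n \<and> (\<forall>j\<in>J. A \<omega> (\<pi> \<omega> j) \<in> B j)}"
      using k by (auto simp: n_def J_def)
    then show ?thesis
      using prob_permuted_ages[unfolded J_def n_def, OF \<pi>_meas \<pi>_perm \<pi>_unif \<pi>_indep] pos
      by (simp add: N_eq n_def J_def age_law_def)
  qed
  moreover have "\<forall>s::real. 0 < s \<and> s < 1 \<longrightarrow> (\<forall>x::real.
      (LINT y:{x..}|lborel. f_dens 0 (tau_par m \<delta>) y) \<le> (LINT y:{x..}|lborel. f_dens s (tau_par m \<delta>) y))"
    using set_integral_f_dens_atLeast_mono[OF tau_gt_1, of 0] by simp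
  ultimately show ?thesis
    using pos by blast
qed

end
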